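(* For every NBA $\mathcal A$, the relation $P(\subseteq^{\mathrm{bw\text{-}di}},\sqsubset^{\mathrm{di}})$ is good for pruning, i.e. $\mathcal L(\mathrm{Prune}(\mathcal A,P(\subseteq^{\mathrm{bw\text{-}di}},\sqsubset^{\mathrm{di}})))=\mathcal L(\mathcal A)$.
   Context: An NBA is $\mathcal A=(\Sigma,Q,I,F,\delta)$, $\delta\subseteq Q\times\Sigma\times Q$, assumed forward and backward complete; initial traces start in $I$, fair traces are infinite and visit $F$ infinitely often; the language is the set of infinite words with an initial fair trace. Direct simulation $\sqsubseteq^{\mathrm{di}}$: in the game from $(p_0,q_0)$, at round $i$ from $(p_i,q_i)$ Spoiler picks $p_i\xrightarrow{\sigma_i}p_{i+1}$ and Duplicator answers $q_i\xrightarrow{\sigma_i}q_{i+1}$; Duplicator wins the infinite play if $p_i\in F\Rightarrow q_i\in F$ for all $i$; $p\sqsubseteq^{\mathrm{di}}q$ iff Duplicator has a winning strategy from $(p,q)$; $\sqsubset^{\mathrm{di}}$ is its strict part. Backward direct trace inclusion: $p\subseteq^{\mathrm{bw\text{-}di}}q$ iff for every finite word $\sigma_0\cdots\sigma_{m-1}$ and every initial finite trace $p_0\xrightarrow{\sigma_0}\cdots\xrightarrow{\sigma_{m-1}}p_m=p$ there is an initial finite trace $q_0\xrightarrow{\sigma_0}\cdots\xrightarrow{\sigma_{m-1}}q_m=q$ with $p_i\in F\Rightarrow q_i\in F$ for $0\le i\le m$. $\mathrm{Prune}(\mathcal A,P)$ has transition set $\{t\in\delta:\nexists t'\in\delta,(t,t')\in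 P\}$; $P(R_b,R_f)=\{((p,\sigma,r),(p',\sigma,r'))\in\delta\times\delta:p\,R_b\,p',\ r\,R_f\,r'\}$. *)

theory Defs
  imports Main
begin

record ('s, 'q) nba =
  alph  :: "'s set"
  states :: "'q set"
  init  :: "'q set"
  acc   :: "'q set"
  trans :: "('q \<times> 's \<times> 'q) set"

definition well_formed_nba :: "('s, 'q) nba \<Rightarrow> bool" where
  "well_formed_nba A \<longleftrightarrow> finite (alph A) \<and> finite (states A) \<and>
     init A \<subseteq> states A \<and> acc A \<subseteq> states A \<and>
     trans A \<subseteq> states A \<times> alph A \<times> states A"

definition forward_complete :: "('s, 'q) nba \<Rightarrow> bool" where
  "forward_complete A \<longleftrightarrow>
     (\<forall>q\<in>states A. \<forall>a\<in>alph A. \<exists>q'. (q, a, q') \<in> trans A)"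

definition backward_complete :: "('s, 'q) nba \<Rightarrow> bool" where
  "backward_complete A \<longleftrightarrow>
     (\<forall>q\<in>states A. \<forall>a\<in>alph A. \<exists>q'. (q', a, q) \<in> trans A)"

definition lang :: "('s, 'q) nba \<Rightarrow> (nat \<Rightarrow> 's) set" where
  "lang A = {w. \<exists>\<rho>. \<rho> 0 \<in> init A \<and> (\<forall>i. (\<rho> i, w i, \<rho> (Suc i)) \<in> trans A)
                    \<and> (\<exists>\<^sub>\<infinity>i. \<rho> i \<in> acc A)}"

text \<open>A Duplicator strategy maps the history of Spoiler's moves
  (states p_0..p_i and letters sigma_0..sigma_(i-1)) to Duplicator's state q_i (i >= 1).\<close>
definition di_sim :: "('s, 'q) nba \<Rightarrow> 'q \<Rightarrow> 'q \<Rightarrow> bool" where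
  "di_sim A p0 q0 \<longleftrightarrow>
    (\<exists>str :: 'q list \<Rightarrow> 's list \<Rightarrow> 'q.
      \<forall>ps \<sigma>s. (ps 0 = p0 \<and> (\<forall>i. (ps i, \<sigma>s i, ps (Suc i)) \<in> trans A)) \<longrightarrow>
        (let qs = (\<lambda>i. if i = 0 then q0 else str (map ps [0..<Suc i]) (map \<sigma>s [0..<i]))
         in \<forall>i. (qs i, \<sigma>s i, qs (Suc i)) \<in> trans A \<and> (ps i \<in> acc A \<longrightarrow> qs i \<in> acc A)))"

definition strict_di_sim :: "('s, 'q) nba \<Rightarrow> 'q \<Rightarrow> 'q \<Rightarrow> bool" where
  "strict_di_sim A p q \<longleftrightarrow> di_sim A p q \<and> \<not> di_sim A q p"

definition bw_di_incl :: "('s, 'q) nba \<Rightarrow> 'q \<Rightarrow> 'q \<Rightarrow> bool" where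
  "bw_di_incl A p q \<longleftrightarrow>
    (\<forall>(m::nat) (w :: nat \<Rightarrow> 's) (ps :: nat \<Rightarrow> 'q).
       (ps 0 \<in> init A \<and> (\<forall>i<m. (ps i, w i, ps (Suc i)) \<in> trans A) \<and> ps m = p) \<longrightarrow>
       (\<exists>qs :: nat \<Rightarrow> 'q. qs 0 \<in> init A \<and> (\<forall>i<m. (qs i, w i, qs (Suc i)) \<in> trans A) \<and> qs m = q
           \<and> (\<forall>i\<le>m. ps i \<in> acc A \<longrightarrow> qs i \<in> acc A)))"

definition prune :: "('s, 'q) nba \<Rightarrow> (('q \<times> 's \<times> 'q) \<times> ('q \<times> 's \<times> 'q)) set \<Rightarrow> ('s, 'q) nba" where
  "prune A P = A\<lparr> trans := {t \<in> trans A. \<not> (\<exists>t'\<in>trans A. (t, t') \<in> P)} \<rparr>"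

definition prune_rel :: "('s, 'q) nba \<Rightarrow> ('q \<Rightarrow> 'q \<Rightarrow> bool) \<Rightarrow> ('q \<Rightarrow> 'q \<Rightarrow> bool)
    \<Rightarrow> (('q \<times> 's \<times> 'q) \<times> ('q \<times> 's \<times> 'q)) set" where
  "prune_rel A Rb Rf = {((p, a, r), (p', a', r')). (p, a, r) \<in> trans A \<and> (p', a', r') \<in> trans A
       \<and> a' = a \<and> Rb p p' \<and> Rf r r'}"

end

theory Submission
  imports Defs
begin

text \<open>Pruning only removes transitions, so one inclusion is trivial. For the other, every
  initial finite trace \<rho> is matched by an initial trace \<sigma> of the pruned automaton that is
  accepting wherever \<rho> is and ends in a state simulating the last state of \<rho>. It is extended
  letter by letter: among all initial traces that dominate \<rho> in acceptance and whose next state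
  simulates that of \<rho>, take one whose next state is maximal for direct simulation (measured by
  the number of states it simulates), and carry its last transition over to \<sigma> by simulation.
  That transition survives pruning, because a pruning pair would, through backward trace
  inclusion, yield a competitor whose next state is strictly larger. Koenig's lemma turns these
  finite traces into an infinite fair trace of the pruned automaton.\<close>

abbreviation is_trace :: "('s, 'q) nba \<Rightarrow> (nat \<Rightarrow> 'q) \<Rightarrow> (nat \<Rightarrow> 's) \<Rightarrow> bool" where
  "is_trace A ps ws \<equiv> \<forall>i. (ps i, ws i, ps (Suc i)) \<in> trans A"

definition initial_trace :: "('s, 'q) nba \<Rightarrow> (nat \<Rightarrow> 's) \<Rightarrow> nat \<Rightarrow> (nat \<Rightarrow> 'q) \<Rightarrow> bool" where
  "initial_trace A w m ps \<longleftrightarrow> ps 0 \<in> init A \<and> (\<forall>i<m. (ps i, w i, ps (Suc i)) \<in> trans A)"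

definition acc_dominated :: "('s, 'q) nba \<Rightarrow> nat \<Rightarrow> (nat \<Rightarrow> 'q) \<Rightarrow> (nat \<Rightarrow> 'q) \<Rightarrow> bool" where
  "acc_dominated A m ps qs \<longleftrightarrow> (\<forall>i\<le>m. ps i \<in> acc A \<longrightarrow> qs i \<in> acc A)"

lemma initial_trace_Suc_upd:
  assumes "initial_trace A w m ps" "(ps m, w m, q) \<in> trans A"
  shows "initial_trace A w (Suc m) (ps(Suc m := q))"
  using assms unfolding initial_trace_def by (auto simp: less_Suc_eq)

lemma initial_trace_SucD: "initial_trace A w (Suc m) ps \<Longrightarrow> initial_trace A w m ps"
  unfolding initial_trace_def by simp

lemma acc_dominated_refl: "acc_dominated A m ps ps"
  unfolding acc_dominated_def by simp

lemma acc_dominated_trans: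
  "acc_dominated A m ps qs \<Longrightarrow> acc_dominated A m qs rs \<Longrightarrow> acc_dominated A m ps rs"
  unfolding acc_dominated_def by blast

lemma acc_dominated_Suc_upd:
  "acc_dominated A (Suc m) ps (qs(Suc m := q)) \<longleftrightarrow>
     acc_dominated A m ps qs \<and> (ps (Suc m) \<in> acc A \<longrightarrow> q \<in> acc A)"
  unfolding acc_dominated_def by (auto simp: le_Suc_eq)

lemma bw_di_incl_iff:
  "bw_di_incl A p q \<longleftrightarrow> (\<forall>m w ps. initial_trace A w m ps \<and> ps m = p \<longrightarrow>
     (\<exists>qs. initial_trace A w m qs \<and> qs m = q \<and> acc_dominated A m ps qs))"
  unfolding bw_di_incl_def initial_trace_def acc_dominated_def by blast

definition dup_play :: "('q list \<Rightarrow> 's list \<Rightarrow> 'q) \<Rightarrow> 'q \<Rightarrow> (nat \<Rightarrow> 'q) \<Rightarrow> (nat \<Rightarrow> 's) \<Rightarrow> nat \<Rightarrow> 'q"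
  where "dup_play str q0 ps ws i = (if i = 0 then q0 else str (map ps [0..<Suc i]) (map ws [0..<i]))"

definition di_winning :: "('s, 'q) nba \<Rightarrow> 'q \<Rightarrow> 'q \<Rightarrow> ('q list \<Rightarrow> 's list \<Rightarrow> 'q) \<Rightarrow> bool" where
  "di_winning A p0 q0 str \<longleftrightarrow> (\<forall>ps ws. ps 0 = p0 \<and> is_trace A ps ws \<longrightarrow>
     (\<forall>i. (dup_play str q0 ps ws i, ws i, dup_play str q0 ps ws (Suc i)) \<in> trans A
          \<and> (ps i \<in> acc A \<longrightarrow> dup_play str q0 ps ws i \<in> acc A)))"

lemma di_sim_iff_winning: "di_sim A p q \<longleftrightarrow> (\<exists>str. di_winning A p q str)"
  unfolding di_sim_def di_winning_def dup_play_def Let_def by simp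

lemma dup_play_0 [simp]: "dup_play str q ps ws 0 = q"
  by (simp add: dup_play_def)

lemma dup_play_Suc: "dup_play str q ps ws (Suc i) = str (map ps [0..<Suc (Suc i)]) (map ws [0..<Suc i])"
  by (simp add: dup_play_def del: upt_Suc)

lemma dup_play_prefix:
  assumes "j \<le> i"
  shows "dup_play str q (nth (map ps [0..<Suc i])) (nth (map ws [0..<i])) j = dup_play str q ps ws j"
proof -
  have "map (nth (map ps [0..<Suc i])) [0..<Suc j] = map ps [0..<Suc j]"
       "map (nth (map ws [0..<i])) [0..<j] = map ws [0..<j]"
    using assms by (auto simp del: upt_Suc)
  then show ?thesis by (simp only: dup_play_def)
qed

lemma di_winningD:
  assumes "di_winning A p q str" "ps 0 = p" "is_trace A ps ws"
  shows "(dup_play str q ps ws i, ws i, dup_play str q ps ws (Suc i)) \<in> trans A"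
    and "ps i \<in> acc A \<Longrightarrow> dup_play str q ps ws i \<in> acc A"
  using assms unfolding di_winning_def by blast+

lemma di_sim_refl: "di_sim A p p"
proof -
  have "dup_play (\<lambda>ps ws. last ps) (ps 0) ps ws i = ps i" for ps :: "nat \<Rightarrow> 'q" and ws :: "nat \<Rightarrow> 's" and i
    by (cases i) (simp_all add: dup_play_Suc del: upt_Suc, simp)
  then have "di_winning A p p (\<lambda>ps ws. last ps)"
    unfolding di_winning_def by metis
  then show ?thesis
    unfolding di_sim_iff_winning by blast
qed

lemma di_sim_trans:
  assumes "di_sim A p q" "di_sim A q r"
  shows "di_sim A p r"
proof -
  obtain str1 str2 where str1: "di_winning A p q str1" and str2: "di_winning A q r str2"
    using assms unfolding di_sim_iff_winning by blast
  define str where "str ps ws = str2 (map (dup_play str1 q (nth ps) (nth ws)) [0..<length ps]) ws" for ps ws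
  have composed: "dup_play str r ps ws i = dup_play str2 r (dup_play str1 q ps ws) ws i" for ps ws i
  proof (cases i)
    case (Suc k)
    have "map (dup_play str1 q (nth (map ps [0..<Suc i])) (nth (map ws [0..<i]))) [0..<Suc i]
        = map (dup_play str1 q ps ws) [0..<Suc i]"
      by (rule map_cong) (auto simp: dup_play_prefix simp del: upt_Suc)
    then show ?thesis
      using Suc by (simp add: str_def dup_play_Suc del: upt_Suc map_eq_conv)
  qed simp
  have "di_winning A p r str"
    unfolding di_winning_def composed
  proof (intro allI impI)
    fix ps ws i
    assume play: "ps 0 = p \<and> is_trace A ps ws"
    then have "dup_play str1 q ps ws 0 = q \<and> is_trace A (dup_play str1 q ps ws) ws"
      using str1 by (simp add: di_winningD)
    then show "(dup_play str2 r (dup_play str1 q ps ws) ws i, ws i,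
          dup_play str2 r (dup_play str1 q ps ws) ws (Suc i)) \<in> trans A \<and>
        (ps i \<in> acc A \<longrightarrow> dup_play str2 r (dup_play str1 q ps ws) ws i \<in> acc A)"
      using play str1 str2 by (blast dest: di_winningD)
  qed
  then show ?thesis
    unfolding di_sim_iff_winning by blast
qed

definition extendable :: "(nat \<Rightarrow> (nat \<Rightarrow> 'a) \<Rightarrow> bool) \<Rightarrow> nat \<Rightarrow> (nat \<Rightarrow> 'a) \<Rightarrow> bool" where
  "extendable P k \<sigma> \<longleftrightarrow> (\<forall>n\<ge>k. \<exists>\<sigma>'. P n \<sigma>' \<and> (\<forall>j<k. \<sigma>' j = \<sigma> j))"

lemma extendable_step:
  assumes "finite S"
    and range: "\<And>n \<sigma> i. P n \<sigma> \<Longrightarrow> i \<le> n \<Longrightarrow> \<sigma> i \<in> S"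
    and mono: "\<And>n m \<sigma>. P n \<sigma> \<Longrightarrow> m \<le> n \<Longrightarrow> P m \<sigma>"
    and "extendable P k \<sigma>"
  shows "\<exists>s. extendable P (Suc k) (\<sigma>(k := s))"
proof (rule ccontr)
  assume "\<nexists>s. extendable P (Suc k) (\<sigma>(k := s))"
  then obtain N where N: "\<And>s. N s \<ge> Suc k \<and> \<not> (\<exists>\<sigma>'. P (N s) \<sigma>' \<and> (\<forall>j<Suc k. \<sigma>' j = (\<sigma>(k := s)) j))"
    unfolding extendable_def by metis
  \<comment> \<open>An extension longer than every bound N s, s \<in> S, has some value s at k: contradiction.\<close>
  define M where "M = max (Suc k) (Max (N ` S))"
  have "k \<le> M"
    unfolding M_def by simp
  then obtain \<sigma>' where \<sigma>': "P M \<sigma>'" "\<forall>j<k. \<sigma>' j = \<sigma> j"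
    using \<open>extendable P k \<sigma>\<close> unfolding extendable_def by blast
  have "\<sigma>' k \<in> S"
    using range[OF \<sigma>'(1)] unfolding M_def by simp
  then have "P (N (\<sigma>' k)) \<sigma>'"
    using mono[OF \<sigma>'(1)] \<open>finite S\<close> unfolding M_def by (simp add: le_max_iff_disj)
  moreover have "\<forall>j<Suc k. \<sigma>' j = (\<sigma>(k := \<sigma>' k)) j"
    using \<sigma>'(2) by (simp add: less_Suc_eq)
  ultimately show False
    using N by blast
qed

lemma koenig_lemma:
  fixes P :: "nat \<Rightarrow> (nat \<Rightarrow> 'a) \<Rightarrow> bool"
  assumes "finite S"
    and ex: "\<And>n. \<exists>\<sigma>. P n \<sigma>"
    and range: "\<And>n \<sigma> i. P n \<sigma> \<Longrightarrow> i \<le> n \<Longrightarrow> \<sigma> i \<in> S"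
    and mono: "\<And>n m \<sigma>. P n \<sigma> \<Longrightarrow> m \<le> n \<Longrightarrow> P m \<sigma>"
    and prefix: "\<And>n \<sigma> \<sigma>'. P n \<sigma> \<Longrightarrow> (\<forall>j\<le>n. \<sigma>' j = \<sigma> j) \<Longrightarrow> P n \<sigma>'"
  shows "\<exists>\<sigma>. \<forall>n. P n \<sigma>"
proof -
  define seq where
    "seq = rec_nat (\<lambda>_. undefined) (\<lambda>k \<sigma>. \<sigma>(k := SOME s. extendable P (Suc k) (\<sigma>(k := s))))"
  have seq_Suc: "seq (Suc k) = (seq k)(k := SOME s. extendable P (Suc k) ((seq k)(k := s)))" for k
    by (simp add: seq_def)
  have extendable_seq: "extendable P k (seq k)" for k
  proof (induction k)
    case 0
    then show ?case
      using ex by (simp add: extendable_def)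
  next
    case (Suc k)
    have "\<exists>s. extendable P (Suc k) ((seq k)(k := s))"
      using assms(1) range mono Suc.IH by (rule extendable_step)
    then show ?case
      unfolding seq_Suc by (rule someI_ex)
  qed
  define \<sigma> where "\<sigma> i = seq (Suc i) i" for i
  have seq_eq: "\<forall>j<k. seq k j = \<sigma> j" for k
    by (induction k) (auto simp: seq_Suc \<sigma>_def less_Suc_eq)
  have "P n \<sigma>" for n
  proof -
    obtain \<sigma>' where "P (Suc n) \<sigma>'" "\<forall>j<Suc n. \<sigma>' j = seq (Suc n) j"
      using extendable_seq[of "Suc n"] unfolding extendable_def by blast
    moreover have "\<forall>j\<le>n. \<sigma> j = \<sigma>' j"
      using calculation(2) seq_eq[of "Suc n"] by simp
    ultimately show ?thesis
      using mono[of "Suc n" \<sigma>' n] prefix[of n \<sigma>' \<sigma>] by simp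
  qed
  then show ?thesis
    by blast
qed

lemma trans_prune_rel_iff:
  "(x, a, y) \<in> trans (prune A (prune_rel A Rb Rf)) \<longleftrightarrow>
     (x, a, y) \<in> trans A \<and> \<not> (\<exists>x' y'. (x', a, y') \<in> trans A \<and> Rb x x' \<and> Rf y y')"
  unfolding prune_def prune_rel_def by auto

lemma init_prune [simp]: "init (prune A P) = init A"
  and acc_prune [simp]: "acc (prune A P) = acc A"
  by (simp_all add: prune_def)

lemma trans_prune_subset: "trans (prune A P) \<subseteq> trans A"
  unfolding prune_def by auto

lemma lang_prune_subset: "lang (prune A P) \<subseteq> lang A"
  unfolding lang_def using trans_prune_subset by fastforce

lemma initial_trace_prune: "initial_trace (prune A P) w m ps \<Longrightarrow> initial_trace A w m ps"
  unfolding initial_trace_def using trans_prune_subset by auto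

lemma strict_di_sim_trans_left: "di_sim A x y \<Longrightarrow> strict_di_sim A y z \<Longrightarrow> strict_di_sim A x z"
  unfolding strict_di_sim_def by (meson di_sim_trans)

lemma trans_pruned_if_undominated:
  assumes "initial_trace A w m ps" "(ps m, a, z) \<in> trans A"
    and "\<nexists>qs z'. initial_trace A w m qs \<and> acc_dominated A m ps qs
           \<and> (qs m, a, z') \<in> trans A \<and> strict_di_sim A z z'"
  shows "(ps m, a, z) \<in> trans (prune A (prune_rel A (bw_di_incl A) (strict_di_sim A)))"
proof -
  have "\<not> (bw_di_incl A (ps m) x' \<and> (x', a, z') \<in> trans A \<and> strict_di_sim A z z')" for x' z'
  proof
    assume "bw_di_incl A (ps m) x' \<and> (x', a, z') \<in> trans A \<and> strict_di_sim A z z'"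
    moreover from this obtain qs where "initial_trace A w m qs" "qs m = x'" "acc_dominated A m ps qs"
      using assms(1) unfolding bw_di_incl_iff by blast
    ultimately show False
      using assms(3) by blast
  qed
  then show ?thesis
    using assms(2) unfolding trans_prune_rel_iff by blast
qed

lemma map_case_nat_upt: "map (case_nat x f) [0..<Suc n] = x # map f [0..<n]"
  by (simp add: map_upt_Suc del: upt_Suc)

text \<open>The simulation game only quantifies over infinite Spoiler plays, so forward completeness is
  what makes simulation transfer acceptance and moves from a state.\<close>
locale complete_nba =
  fixes A :: "('s, 'q) nba"
  assumes well_formed: "well_formed_nba A"
    and forward_complete: "forward_complete A"
begin

lemma trans_in_states: "(x, a, y) \<in> trans A \<Longrightarrow> x \<in> states A \<and> a \<in> alph A \<and> y \<in> states A"
  using well_formed unfolding well_formed_nba_def by auto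

lemma ex_trace_from:
  assumes "q \<in> states A" "a \<in> alph A"
  shows "\<exists>ps ws. ps 0 = q \<and> is_trace A ps ws"
proof -
  have "\<exists>ps. \<forall>n. (ps n \<in> states A \<and> (n = 0 \<longrightarrow> ps n = q)) \<and> (ps n, a, ps (Suc n)) \<in> trans A"
  proof (rule dependent_nat_choice)
    fix x :: 'q and n :: nat
    assume "x \<in> states A \<and> (n = 0 \<longrightarrow> x = q)"
    then obtain y where "(x, a, y) \<in> trans A"
      using forward_complete assms(2) unfolding forward_complete_def by blast
    then show "\<exists>y. (y \<in> states A \<and> (Suc n = 0 \<longrightarrow> y = q)) \<and> (x, a, y) \<in> trans A"
      using trans_in_states by blast
  qed (use assms(1) in blast)
  then obtain ps where "\<forall>n. ps 0 = q \<and> (ps n, a, ps (Suc n)) \<in> trans A"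
    by blast
  then show ?thesis
    by (intro exI[of _ ps] exI[of _ "\<lambda>_. a"]) auto
qed

lemma di_sim_acc:
  assumes "di_sim A p q" "p \<in> states A" "alph A \<noteq> {}" "p \<in> acc A"
  shows "q \<in> acc A"
proof -
  obtain str where "di_winning A p q str"
    using assms(1) unfolding di_sim_iff_winning by blast
  moreover obtain ps ws where "ps 0 = p" "is_trace A ps ws"
    using ex_trace_from assms(2,3) by blast
  ultimately show ?thesis
    using di_winningD(2)[of A p q str ps ws 0] assms(4) by simp
qed

text \<open>Spoiler's first move is prefixed to every later play, so that the residual strategy
  after that move witnesses the simulation of the successors.\<close>
lemma di_sim_step:
  assumes "di_sim A p q" "(p, a, p') \<in> trans A"
  shows "\<exists>q'. (q, a, q') \<in> trans A \<and> di_sim A p' q'"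
proof -
  obtain str where str: "di_winning A p q str"
    using assms(1) unfolding di_sim_iff_winning by blast
  have extended: "is_trace A (case_nat p ps) (case_nat a ws)"
    if "ps 0 = p'" "is_trace A ps ws" for ps ws
    using that assms(2) by (auto split: nat.split)
  define q' where "q' = str [p, p'] [a]"
  define str' where "str' ps ws = str (p # ps) (a # ws)" for ps ws
  have residual: "dup_play str' q' ps ws i = dup_play str q (case_nat p ps) (case_nat a ws) (Suc i)"
    if "ps 0 = p'" for ps ws i
    using that by (cases i)
      (simp add: q'_def str'_def dup_play_Suc,
       simp add: q'_def str'_def dup_play_Suc map_case_nat_upt del: upt_Suc)
  obtain ps ws where "ps 0 = p'" "is_trace A ps ws"
    using ex_trace_from trans_in_states assms(2) by blast
  then have "(q, a, q') \<in> trans A"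
    using di_winningD(1)[OF str nat.case(1) extended, of ps ws 0] by (simp add: residual[symmetric])
  moreover have "di_winning A p' q' str'"
    unfolding di_winning_def
  proof (intro allI impI)
    fix ps ws i
    assume play: "ps 0 = p' \<and> is_trace A ps ws"
    show "(dup_play str' q' ps ws i, ws i, dup_play str' q' ps ws (Suc i)) \<in> trans A \<and>
        (ps i \<in> acc A \<longrightarrow> dup_play str' q' ps ws i \<in> acc A)"
      using di_winningD[OF str nat.case(1) extended, of ps ws "Suc i"] play by (simp add: residual)
  qed
  ultimately show ?thesis
    unfolding di_sim_iff_winning by blast
qed

abbreviation pruned :: "('s, 'q) nba" where
  "pruned \<equiv> prune A (prune_rel A (bw_di_incl A) (strict_di_sim A))"

definition di_rank :: "'q \<Rightarrow> nat" where
  "di_rank z = card {x \<in> states A. di_sim A x z}"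

lemma finite_states: "finite (states A)"
  using well_formed unfolding well_formed_nba_def by simp

lemma di_rank_less_card: "di_rank z < Suc (card (states A))"
  unfolding di_rank_def using finite_states by (simp add: card_mono le_imp_less_Suc)

lemma di_rank_strict_mono:
  assumes "strict_di_sim A z z'" "z' \<in> states A"
  shows "di_rank z < di_rank z'"
proof -
  have "di_sim A z z'" "\<not> di_sim A z' z"
    using assms(1) unfolding strict_di_sim_def by auto
  then have "{x \<in> states A. di_sim A x z} \<subseteq> {x \<in> states A. di_sim A x z'}"
    and "z' \<in> {x \<in> states A. di_sim A x z'} - {x \<in> states A. di_sim A x z}"
    using di_sim_trans[of A _ z z'] di_sim_refl[of A z'] assms(2) by auto
  then have "{x \<in> states A. di_sim A x z} \<subset> {x \<in> states A. di_sim A x z'}"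
    by blast
  then show ?thesis
    unfolding di_rank_def using finite_states by (simp add: psubset_card_mono)
qed

lemma initial_trace_in_states:
  assumes "initial_trace A w m ps" "i \<le> m"
  shows "ps i \<in> states A"
proof (cases i)
  case 0
  then show ?thesis
    using assms(1) well_formed unfolding initial_trace_def well_formed_nba_def by auto
next
  case (Suc j)
  then have "(ps j, w j, ps i) \<in> trans A"
    using assms unfolding initial_trace_def by simp
  then show ?thesis
    using trans_in_states by blast
qed

definition dominating_extension :: "(nat \<Rightarrow> 's) \<Rightarrow> nat \<Rightarrow> (nat \<Rightarrow> 'q) \<Rightarrow> (nat \<Rightarrow> 'q) \<Rightarrow> bool" where
  "dominating_extension w k \<rho> \<tau> \<longleftrightarrow> initial_trace A w (Suc k) \<tau> \<and> acc_dominated A k \<rho> \<tau>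
      \<and> di_sim A (\<rho> (Suc k)) (\<tau> (Suc k))"

lemma ex_maximal_dominating_extension:
  assumes "initial_trace A w (Suc k) \<rho>"
  obtains \<tau> where "dominating_extension w k \<rho> \<tau>"
    and "\<And>\<tau>'. dominating_extension w k \<rho> \<tau>' \<Longrightarrow> di_rank (\<tau>' (Suc k)) \<le> di_rank (\<tau> (Suc k))"
proof -
  have "dominating_extension w k \<rho> \<rho>"
    using assms unfolding dominating_extension_def by (simp add: acc_dominated_refl di_sim_refl)
  then show ?thesis
    using that ex_has_greatest_nat[of "dominating_extension w k \<rho>" \<rho> "\<lambda>\<tau>. di_rank (\<tau> (Suc k))"]
      di_rank_less_card by metis
qed

lemma maximal_extension_unpruned:
  assumes \<tau>: "dominating_extension w k \<rho> \<tau>"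
    and maximal: "\<And>\<tau>'. dominating_extension w k \<rho> \<tau>' \<Longrightarrow> di_rank (\<tau>' (Suc k)) \<le> di_rank (\<tau> (Suc k))"
    and \<sigma>: "initial_trace A w k \<sigma>" "acc_dominated A k \<tau> \<sigma>"
    and z: "(\<sigma> k, w k, z) \<in> trans A" "di_sim A (\<tau> (Suc k)) z"
  shows "(\<sigma> k, w k, z) \<in> trans pruned"
proof (rule trans_pruned_if_undominated[OF \<sigma>(1) z(1)], safe)
  fix qs z'
  assume qs: "initial_trace A w k qs" "acc_dominated A k \<sigma> qs" "(qs k, w k, z') \<in> trans A"
    and "strict_di_sim A z z'"
  with z(2) have strictly_above: "strict_di_sim A (\<tau> (Suc k)) z'"
    by (blast intro: strict_di_sim_trans_left)
  have "dominating_extension w k \<rho> (qs(Suc k := z'))"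
    using \<tau> initial_trace_Suc_upd[OF qs(1,3)] acc_dominated_trans[OF _ acc_dominated_trans[OF \<sigma>(2) qs(2)]]
      di_sim_trans strictly_above
    unfolding dominating_extension_def strict_di_sim_def by (auto simp: acc_dominated_def)
  moreover have "di_rank (\<tau> (Suc k)) < di_rank z'"
    using di_rank_strict_mono strictly_above trans_in_states qs(3) by blast
  ultimately show False
    using maximal by fastforce
qed

lemma pruned_initial_trace_Suc:
  assumes IH: "\<And>\<tau>. initial_trace A w k \<tau> \<Longrightarrow>
      \<exists>\<sigma>. initial_trace pruned w k \<sigma> \<and> di_sim A (\<tau> k) (\<sigma> k) \<and> acc_dominated A k \<tau> \<sigma>"
    and \<rho>: "initial_trace A w (Suc k) \<rho>"
  shows "\<exists>\<sigma>. initial_trace pruned w (Suc k) \<sigma> \<and> di_sim A (\<rho> (Suc k)) (\<sigma> (Suc k))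
      \<and> acc_dominated A (Suc k) \<rho> \<sigma>"
proof -
  obtain \<tau> where \<tau>: "dominating_extension w k \<rho> \<tau>"
    and maximal: "\<And>\<tau>'. dominating_extension w k \<rho> \<tau>' \<Longrightarrow> di_rank (\<tau>' (Suc k)) \<le> di_rank (\<tau> (Suc k))"
    using ex_maximal_dominating_extension[OF \<rho>] by blast
  then have \<tau>': "initial_trace A w (Suc k) \<tau>" "acc_dominated A k \<rho> \<tau>" "di_sim A (\<rho> (Suc k)) (\<tau> (Suc k))"
    unfolding dominating_extension_def by auto
  obtain \<sigma> where \<sigma>: "initial_trace pruned w k \<sigma>" "di_sim A (\<tau> k) (\<sigma> k)" "acc_dominated A k \<tau> \<sigma>"
    using IH initial_trace_SucD[OF \<tau>'(1)] by blast
  obtain z where z: "(\<sigma> k, w k, z) \<in> trans A" "di_sim A (\<tau> (Suc k)) z"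
    using di_sim_step[OF \<sigma>(2)] \<tau>'(1) unfolding initial_trace_def by blast
  have "(\<sigma> k, w k, z) \<in> trans pruned"
    using \<tau> maximal initial_trace_prune[OF \<sigma>(1)] \<sigma>(3) z by (rule maximal_extension_unpruned)
  then have "initial_trace pruned w (Suc k) (\<sigma>(Suc k := z))"
    by (rule initial_trace_Suc_upd[OF \<sigma>(1)])
  moreover have "di_sim A (\<rho> (Suc k)) z"
    using di_sim_trans[OF \<tau>'(3) z(2)] .
  moreover have "acc_dominated A (Suc k) \<rho> (\<sigma>(Suc k := z))"
    unfolding acc_dominated_Suc_upd
    using acc_dominated_trans[OF \<tau>'(2) \<sigma>(3)] di_sim_acc[OF \<open>di_sim A (\<rho> (Suc k)) z\<close>]
      initial_trace_in_states[OF \<rho>] trans_in_states \<rho> unfolding initial_trace_def by blast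
  ultimately show ?thesis
    by (intro exI[of _ "\<sigma>(Suc k := z)"]) simp
qed

lemma pruned_initial_trace:
  "initial_trace A w k \<rho> \<Longrightarrow>
     \<exists>\<sigma>. initial_trace pruned w k \<sigma> \<and> di_sim A (\<rho> k) (\<sigma> k) \<and> acc_dominated A k \<rho> \<sigma>"
proof (induction k arbitrary: \<rho>)
  case 0
  then show ?case
    by (intro exI[of _ \<rho>]) (simp add: initial_trace_def acc_dominated_refl di_sim_refl)
next
  case (Suc k)
  show ?case
    by (rule pruned_initial_trace_Suc[OF Suc.IH Suc.prems])
qed

lemma lang_subset_lang_pruned: "lang A \<subseteq> lang pruned"
proof
  fix w
  assume "w \<in> lang A"
  then obtain \<pi> where \<pi>: "\<pi> 0 \<in> init A" "is_trace A \<pi> w" "\<exists>\<^sub>\<infinity>i. \<pi> i \<in> acc A"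
    unfolding lang_def by blast
  define G where "G n \<sigma> \<longleftrightarrow> initial_trace pruned w n \<sigma> \<and> acc_dominated A n \<pi> \<sigma>" for n \<sigma>
  have "\<exists>\<sigma>. \<forall>n. G n \<sigma>"
  proof (rule koenig_lemma[OF finite_states])
    show "\<exists>\<sigma>. G n \<sigma>" for n
      using pruned_initial_trace[of w n \<pi>] \<pi>(1,2) unfolding G_def initial_trace_def by blast
    show "\<sigma> i \<in> states A" if "G n \<sigma>" "i \<le> n" for n \<sigma> i
      using that initial_trace_in_states initial_trace_prune unfolding G_def by blast
    show "G m \<sigma>" if "G n \<sigma>" "m \<le> n" for n m \<sigma>
      using that unfolding G_def initial_trace_def acc_dominated_def by auto
    show "G n \<sigma>'" if "G n \<sigma>" "\<forall>j\<le>n. \<sigma>' j = \<sigma> j" for n \<sigma> \<sigma>'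
      using that unfolding G_def initial_trace_def acc_dominated_def by (auto simp: Suc_le_eq)
  qed
  then obtain \<sigma> where "\<forall>n. G n \<sigma>"
    by blast
  then have "\<sigma> 0 \<in> init A" "is_trace pruned \<sigma> w" "\<forall>i. \<pi> i \<in> acc A \<longrightarrow> \<sigma> i \<in> acc A"
    unfolding G_def initial_trace_def acc_dominated_def by (simp, blast, blast)
  moreover have "\<exists>\<^sub>\<infinity>i. \<sigma> i \<in> acc A"
    using \<pi>(3) calculation(3) by (auto elim: frequently_elim1)
  ultimately show "w \<in> lang pruned"
    unfolding lang_def by auto
qed

end

theorem theorem5p4:
  fixes A :: "('s, 'q) nba"
  assumes "well_formed_nba A" and "forward_complete A" and "backward_complete A"
  shows "lang (prune A (prune_rel A (bw_di_incl A) (strict_di_sim A))) = lang A"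
proof -
  interpret complete_nba A
    using assms(1,2) by unfold_locales
  show ?thesis
    using lang_prune_subset lang_subset_lang_pruned by blast
qed

end
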